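(* Let $G$ be a good finite group and let $N$ be a normal subgroup of $G$ with $N\cong\mathbb Z_2$. If $G/N$ possesses a complete mapping, then $G$ possesses a complete mapping.
   Context: A finite group is called good if its Sylow-2 subgroup is trivial or noncyclic (and bad if its Sylow-2 subgroup is nontrivial and cyclic). A complete mapping of a group $G$ is a bijection $\phi:G\to G$ such that $g\mapsto g\phi(g)$ is also a bijection of $G$; equivalently, there are an index set $I$ and bijections $a,b,c:I\to G$ with $a(i)b(i)=c(i)$ for all $i\in I$. *)

theory Defs
  imports "HOL-Algebra.Algebra"
begin

definition sylow2_subgroup :: "('a, 'b) monoid_scheme \<Rightarrow> 'a set \<Rightarrow> bool" where
  "sylow2_subgroup G P \<longleftrightarrow> subgroup P G \<and>
     (\<exists>a::nat. card P = 2 ^ a \<and> 2 ^ a dvd order G \<and> \<not> 2 ^ (Suc a) dvd order G)"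

text \<open>Good: every Sylow 2-subgroup is trivial or noncyclic (all Sylow 2-subgroups are conjugate).\<close>
definition good_group :: "('a, 'b) monoid_scheme \<Rightarrow> bool" where
  "good_group G \<longleftrightarrow> (\<forall>P. sylow2_subgroup G P \<longrightarrow>
      P = {\<one>\<^bsub>G\<^esub>} \<or> \<not> cyclic_group (G\<lparr>carrier := P\<rparr>))"

definition complete_mapping :: "('a, 'b) monoid_scheme \<Rightarrow> ('a \<Rightarrow> 'a) \<Rightarrow> bool" where
  "complete_mapping G \<phi> \<longleftrightarrow> bij_betw \<phi> (carrier G) (carrier G) \<and>
     bij_betw (\<lambda>g. g \<otimes>\<^bsub>G\<^esub> \<phi> g) (carrier G) (carrier G)"

definition has_complete_mapping :: "('a, 'b) monoid_scheme \<Rightarrow> bool" where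
  "has_complete_mapping G \<longleftrightarrow> (\<exists>\<phi>. complete_mapping G \<phi>)"

end

theory Submission
  imports Defs
begin

(*
  Write N = {1, z}; z is a central involution. As G is good, N is not a Sylow 2-subgroup, so
  G/N has even order and contains an involution, which lifts to some x \<notin> N with x^2 = z^\<epsilon>.
  Lift the complete mapping \<theta> of G/N to th with th a \<in> \<theta>(aN). Over a single coset no choice
  of lifts works (the products of {a, az} with {th a, th a z} take only two values), so cosets
  are paired up along x: for a transversal D of N invariant under tau a = a x z^(\<chi>(th a)),
  put phi d = Phi d on D and phi (tau(d) z) = x Phi(d) z^(\<chi>(th d) + \<epsilon>), where Phi a is a
  lift of th a. Then a phi(a) runs through the elements d Phi(d) and d Phi(d) z, i.e. through G,
  and phi is injective once the lifts Phi are chosen coherently along x, again by means of an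
  invariant transversal. The colouring \<chi> of G/N, needed to make tau an involution when
  x^2 = z, and the invariant transversals all come from one fact: two fixed-point-free
  involutions of a finite set have a common proper 2-colouring, as their orbits form even cycles.
*)

definition free_involution_on :: "'a set \<Rightarrow> ('a \<Rightarrow> 'a) \<Rightarrow> bool" where
  "free_involution_on A f \<longleftrightarrow> (\<forall>p\<in>A. f p \<in> A \<and> f p \<noteq> p \<and> f (f p) = p)"

lemma free_involution_onD:
  "free_involution_on A f \<Longrightarrow> p \<in> A \<Longrightarrow> f p \<in> A \<and> f p \<noteq> p \<and> f (f p) = p"
  unfolding free_involution_on_def by blast

lemma free_involution_on_Diff_orbit:
  assumes "free_involution_on A f" and "p \<in> A"
  shows "free_involution_on (A - {p, f p}) f"
  using assms unfolding free_involution_on_def by auto metis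

lemma free_involution_on_contract:
  assumes f: "free_involution_on A f" and g: "free_involution_on A g" and p: "p \<in> A"
  shows "free_involution_on (A - {p, f p}) (\<lambda>y. if g y \<in> {p, f p} then g (f (g y)) else g y)"
    (is "free_involution_on _ ?g'")
  unfolding free_involution_on_def
proof
  fix y assume y: "y \<in> A - {p, f p}"
  have f': "f p \<in> A" "f (f p) = p" "f p \<noteq> p" using free_involution_onD[OF f p] by auto
  have g': "\<And>a. a \<in> A \<Longrightarrow> g a \<in> A \<and> g a \<noteq> a \<and> g (g a) = a"
    using free_involution_onD[OF g] by blast
  show "?g' y \<in> A - {p, f p} \<and> ?g' y \<noteq> y \<and> ?g' (?g' y) = y"
  proof (cases "g y \<in> {p, f p}")
    case False
    then show ?thesis using y g' by auto
  next
    case True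
    define w where "w = g y"
    have w: "{p, f p} = {w, f w}" "f w \<in> {p, f p}" "f w \<noteq> w" "f (f w) = w"
      using True f' unfolding w_def by auto
    have gy: "g (g y) = y" using y g' by auto
    have fwA: "f w \<in> A" using w(2) f' p by auto
    have in_A: "g (f w) \<in> A" and gfw: "g (g (f w)) = f w" and not_fw: "g (f w) \<noteq> f w"
      using g'[OF fwA] by auto
    have not_w: "g (f w) \<noteq> w" using gfw gy y w(2) unfolding w_def by auto
    have g'y: "?g' y = g (f w)" using True unfolding w_def by simp
    have "g (f w) \<in> A - {p, f p}" using in_A not_w not_fw w(1) by simp
    moreover have "g (f w) \<noteq> y" using gfw w(3) unfolding w_def by auto
    moreover have "?g' (g (f w)) = y" using gfw w(2,4) gy unfolding w_def by simp
    ultimately show ?thesis unfolding g'y by blast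
  qed
qed

text \<open>The contracted involution joins \<open>g p\<close> and \<open>g (f p)\<close>, so \<open>\<sigma>\<close> already separates them
  and leaves room for \<open>p\<close> and \<open>f p\<close>.\<close>

lemma two_free_involutions_coloring_extend:
  assumes f: "free_involution_on A f" and g: "free_involution_on A g" and p: "p \<in> A" and y: "y \<in> A"
    and \<sigma>: "\<And>y. y \<in> A - {p, f p} \<Longrightarrow>
      \<sigma> (f y) \<noteq> \<sigma> y \<and> \<sigma> (if g y \<in> {p, f p} then g (f (g y)) else g y) \<noteq> \<sigma> y"
  defines "\<tau> \<equiv> \<sigma>(f p := \<sigma> (g p), p := \<not> \<sigma> (g p))"
  shows "\<tau> (f y) \<noteq> \<tau> y \<and> \<tau> (g y) \<noteq> \<tau> y"
proof -
  have fp: "f p \<in> A" "f p \<noteq> p" "f (f p) = p" using free_involution_onD[OF f p] by auto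
  have gA: "\<And>a. a \<in> A \<Longrightarrow> g a \<in> A \<and> g a \<noteq> a \<and> g (g a) = a"
    using free_involution_onD[OF g] by blast
  have \<tau>_p: "\<tau> p = (\<not> \<sigma> (g p))" and \<tau>_fp: "\<tau> (f p) = \<sigma> (g p)"
    and \<tau>_A': "\<And>y. y \<in> A - {p, f p} \<Longrightarrow> \<tau> y = \<sigma> y"
    using fp unfolding \<tau>_def by auto
  have orbit: "\<tau> (f y) \<noteq> \<tau> y \<and> \<tau> (g y) \<noteq> \<tau> y" if "y \<in> {p, f p}" for y
  proof (cases "g p = f p")
    case True
    then show ?thesis using that fp gA[OF p] \<tau>_p \<tau>_fp by auto
  next
    case False
    have gp: "g p \<in> A - {p, f p}" using False gA[OF p] by auto
    have "g (f p) \<noteq> p" using False gA[OF fp(1)] by auto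
    then have gfp: "g (f p) \<in> A - {p, f p}" using gA[OF fp(1)] by auto
    have "\<sigma> (g (f p)) \<noteq> \<sigma> (g p)" using \<sigma>[OF gp] gA[OF p] fp by simp
    then show ?thesis using that fp \<tau>_p \<tau>_fp \<tau>_A'[OF gp] \<tau>_A'[OF gfp] by auto
  qed
  show ?thesis
  proof (cases "y \<in> {p, f p}")
    case False
    then have y': "y \<in> A - {p, f p}" using y by blast
    have "f y \<in> A - {p, f p}"
      using free_involution_onD[OF free_involution_on_Diff_orbit[OF f p] y'] ..
    then have "\<tau> (f y) \<noteq> \<tau> y" using \<sigma>[OF y'] \<tau>_A' y' by simp
    moreover have "\<tau> (g y) \<noteq> \<tau> y"
    proof (cases "g y \<in> {p, f p}")
      case True
      then show ?thesis using orbit[of "g y"] gA[OF y] by auto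
    next
      case False
      then show ?thesis using \<sigma>[OF y'] \<tau>_A' y' gA[OF y] by simp
    qed
    ultimately show ?thesis ..
  qed (rule orbit)
qed

lemma two_free_involutions_coloring:
  assumes "finite A" and "free_involution_on A f" and "free_involution_on A g"
  shows "\<exists>\<sigma> :: 'a \<Rightarrow> bool. \<forall>y\<in>A. \<sigma> (f y) \<noteq> \<sigma> y \<and> \<sigma> (g y) \<noteq> \<sigma> y"
  using assms
proof (induction "card A" arbitrary: A g rule: less_induct)
  case less
  show ?case
  proof (cases "A = {}")
    case False
    then obtain p where p: "p \<in> A" by blast
    let ?A' = "A - {p, f p}" and ?g' = "\<lambda>y. if g y \<in> {p, f p} then g (f (g y)) else g y"
    have "card ?A' < card A" using p less.prems(1) by (intro psubset_card_mono) auto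
    moreover have "finite ?A'" using less.prems(1) by simp
    moreover have "free_involution_on ?A' f"
      using less.prems(2) p by (rule free_involution_on_Diff_orbit)
    moreover have "free_involution_on ?A' ?g'"
      using less.prems(2,3) p by (rule free_involution_on_contract)
    ultimately have "\<exists>\<sigma> :: 'a \<Rightarrow> bool. \<forall>y\<in>?A'. \<sigma> (f y) \<noteq> \<sigma> y \<and> \<sigma> (?g' y) \<noteq> \<sigma> y"
      by (rule less.hyps)
    then obtain \<sigma> :: "'a \<Rightarrow> bool"
      where \<sigma>: "\<And>y. y \<in> ?A' \<Longrightarrow> \<sigma> (f y) \<noteq> \<sigma> y \<and> \<sigma> (?g' y) \<noteq> \<sigma> y"
      by blast
    define \<tau> where "\<tau> = \<sigma>(f p := \<sigma> (g p), p := \<not> \<sigma> (g p))"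
    have "\<tau> (f y) \<noteq> \<tau> y \<and> \<tau> (g y) \<noteq> \<tau> y" if "y \<in> A" for y
      unfolding \<tau>_def by (rule two_free_involutions_coloring_extend[OF less.prems(2,3) p that \<sigma>])
    then show ?thesis by blast
  qed simp
qed

lemma (in group) subgroup_card_two:
  assumes "subgroup H G" and "card H = 2"
  obtains h where "H = {\<one>, h}" and "h \<in> carrier G" and "h \<noteq> \<one>" and "h \<otimes> h = \<one>"
proof -
  obtain a b where ab: "H = {a, b}" "a \<noteq> b" using assms(2) card_2_iff by metis
  have "\<one> \<in> H" using assms(1) by (rule subgroup.one_closed)
  then obtain h where H: "H = {\<one>, h}" and h1: "h \<noteq> \<one>" using ab by auto
  have h: "h \<in> carrier G" using H subgroup.subset[OF assms(1)] by auto
  have "h \<otimes> h \<in> H" using H subgroup.m_closed[OF assms(1)] by auto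
  moreover have "h \<otimes> h \<noteq> h" using h h1 by simp
  ultimately have "h \<otimes> h = \<one>" using H by auto
  then show thesis using that H h h1 by simp
qed

lemma (in group) cyclic_group_card_two:
  assumes "subgroup H G" and "card H = 2"
  shows "cyclic_group (G\<lparr>carrier := H\<rparr>)"
proof -
  obtain h where H: "H = {\<one>, h}" and h: "h \<in> carrier G"
    using subgroup_card_two[OF assms] by blast
  have "generate G {h} = H"
  proof
    show "generate G {h} \<subseteq> H" using H assms(1) by (intro generate_subgroup_incl) auto
    show "H \<subseteq> generate G {h}" using H by (auto intro: generate.one generate.incl)
  qed
  then have "subgroup_generated G {h} = G\<lparr>carrier := H\<rparr>"
    unfolding subgroup_generated_def using h by (simp add: Int_absorb1)
  then show ?thesis using cyclic_group_generated[of h] by simp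
qed

lemma (in group) involution_if_even_order:
  assumes "finite (carrier G)" and "even (order G)"
  obtains h where "h \<in> carrier G" and "h \<noteq> \<one>" and "h \<otimes> h = \<one>"
proof -
  have "order G = 2 ^ 1 * (order G div 2)" using assms(2) by simp
  then obtain H where "subgroup H G" and "card H = 2"
    using sylow_thm[OF two_is_prime_nat is_group _ assms(1)] by fastforce
  then show thesis using that subgroup_card_two by blast
qed

lemma (in group) quotient_even_order_if_good:
  assumes "finite (carrier G)" and "good_group G" and "N \<lhd> G" and "card N = 2"
  shows "even (order (G Mod N))"
proof (rule ccontr)
  assume odd: "odd (order (G Mod N))"
  have N: "subgroup N G" using assms(3) normal_imp_subgroup by blast
  have "order (G Mod N) * 2 = order G"
    using lagrange[OF N] assms(4) by (simp add: order_def FactGroup_def)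
  then have "sylow2_subgroup G N"
    unfolding sylow2_subgroup_def using N assms(4) odd
    by (intro conjI exI[of _ 1]) (auto, presburger)
  then have "N = {\<one>} \<or> \<not> cyclic_group (G\<lparr>carrier := N\<rparr>)"
    using assms(2) unfolding good_group_def by blast
  then show False using assms(4) cyclic_group_card_two[OF N assms(4)] by auto
qed

lemma (in group) complete_mapping_involution_coloring:
  assumes "finite (carrier G)" and cm: "complete_mapping G \<theta>"
    and h: "h \<in> carrier G" "h \<noteq> \<one>" "h \<otimes> h = \<one>"
  obtains \<kappa> :: "'a \<Rightarrow> bool"
  where "\<And>q. q \<in> carrier G \<Longrightarrow> \<kappa> (h \<otimes> q) \<noteq> \<kappa> q"
    and "\<And>q. q \<in> carrier G \<Longrightarrow> \<kappa> (\<theta> (q \<otimes> h)) \<noteq> \<kappa> (\<theta> q)"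
proof -
  have \<theta>: "bij_betw \<theta> (carrier G) (carrier G)" using cm unfolding complete_mapping_def by blast
  define \<theta>' where "\<theta>' = inv_into (carrier G) \<theta>"
  have \<theta>': "\<And>r. r \<in> carrier G \<Longrightarrow> \<theta>' r \<in> carrier G \<and> \<theta> (\<theta>' r) = r"
    and \<theta>'_\<theta>: "\<And>q. q \<in> carrier G \<Longrightarrow> \<theta>' (\<theta> q) = q"
    using \<theta> bij_betw_imp_surj_on[OF \<theta>] unfolding \<theta>'_def
    by (auto simp: bij_betw_inv_into_left bij_betw_inv_into_right intro: inv_into_into)
  have "free_involution_on (carrier G) (\<lambda>q. h \<otimes> q)"
    unfolding free_involution_on_def using h by (simp add: m_assoc[symmetric])
  moreover have "free_involution_on (carrier G) (\<lambda>r. \<theta> (\<theta>' r \<otimes> h))"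
    unfolding free_involution_on_def
  proof (intro ballI conjI)
    fix r assume r: "r \<in> carrier G"
    have hr: "\<theta>' r \<otimes> h \<in> carrier G" using \<theta>' r h by simp
    show "\<theta> (\<theta>' r \<otimes> h) \<in> carrier G" using \<theta> hr by (simp add: bij_betwE)
    show "\<theta> (\<theta>' r \<otimes> h) \<noteq> r"
    proof
      assume "\<theta> (\<theta>' r \<otimes> h) = r"
      then have "\<theta>' r \<otimes> h = \<theta>' r" using \<theta>'_\<theta>[OF hr] by simp
      then show False using \<theta>' r h by simp
    qed
    show "\<theta> (\<theta>' (\<theta> (\<theta>' r \<otimes> h)) \<otimes> h) = r"
      using \<theta>'_\<theta>[OF hr] \<theta>' r h by (simp add: m_assoc)
  qed
  ultimately have "\<exists>\<kappa> :: 'a \<Rightarrow> bool. \<forall>q\<in>carrier G. \<kappa> (h \<otimes> q) \<noteq> \<kappa> q \<and> \<kappa> (\<theta> (\<theta>' q \<otimes> h)) \<noteq> \<kappa> q"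
    by (rule two_free_involutions_coloring[OF assms(1)])
  then obtain \<kappa> :: "'a \<Rightarrow> bool"
    where \<kappa>: "\<And>q. q \<in> carrier G \<Longrightarrow> \<kappa> (h \<otimes> q) \<noteq> \<kappa> q \<and> \<kappa> (\<theta> (\<theta>' q \<otimes> h)) \<noteq> \<kappa> q"
    by blast
  show thesis
  proof (rule that)
    show "\<kappa> (h \<otimes> q) \<noteq> \<kappa> q" if "q \<in> carrier G" for q using \<kappa>[OF that] by blast
    show "\<kappa> (\<theta> (q \<otimes> h)) \<noteq> \<kappa> (\<theta> q)" if q: "q \<in> carrier G" for q
      using \<kappa>[of "\<theta> q"] \<theta>'_\<theta>[OF q] \<theta> q by (simp add: bij_betwE)
  qed
qed

locale central_involution = group G for G (structure) +
  fixes z :: 'a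
  assumes z_closed [simp]: "z \<in> carrier G" and z_neq_one: "z \<noteq> \<one>" and z_square: "z \<otimes> z = \<one>"
    and z_central: "a \<in> carrier G \<Longrightarrow> z \<otimes> a = a \<otimes> z"

lemma (in group) normal_card_two_central:
  assumes "N \<lhd> G" and "card N = 2"
  obtains z where "N = {\<one>, z}" and "central_involution G z"
proof -
  have N: "subgroup N G" using assms(1) normal_imp_subgroup by blast
  obtain z where Nz: "N = {\<one>, z}" and z: "z \<in> carrier G" "z \<noteq> \<one>" "z \<otimes> z = \<one>"
    using subgroup_card_two[OF N assms(2)] by blast
  have "z \<otimes> a = a \<otimes> z" if a: "a \<in> carrier G" for a
  proof -
    have conj: "a \<otimes> z \<otimes> inv a \<otimes> a = a \<otimes> z" using a z(1) by (simp add: m_assoc)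
    have "a \<otimes> z \<otimes> inv a \<in> {\<one>, z}" using normal.inv_op_closed2[OF assms(1) a] Nz by simp
    moreover have "a \<otimes> z \<otimes> inv a \<noteq> \<one>"
    proof
      assume "a \<otimes> z \<otimes> inv a = \<one>"
      then have "a \<otimes> z = a" using conj a by simp
      then show False using a z by simp
    qed
    ultimately have "a \<otimes> z \<otimes> inv a = z" by blast
    then show ?thesis using conj by simp
  qed
  then have "central_involution G z"
    using z by (intro central_involution.intro central_involution_axioms.intro is_group)
  then show thesis using that Nz by blast
qed

context central_involution
begin

definition zpow :: "bool \<Rightarrow> 'a" where
  "zpow u = (if u then z else \<one>)"

lemma zpow_closed [simp]: "zpow u \<in> carrier G"
  by (simp add: zpow_def)

lemma zpow_False [simp]: "zpow False = \<one>" and zpow_True: "zpow True = z"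
  by (simp_all add: zpow_def)

lemma zpow_mult [simp]: "zpow u \<otimes> zpow v = zpow (u \<noteq> v)"
  by (simp add: zpow_def z_square)

lemma zpow_mult_z [simp]: "zpow u \<otimes> z = zpow (\<not> u)"
  and zpow_mult_z_assoc [simp]: "y \<in> carrier G \<Longrightarrow> zpow u \<otimes> (z \<otimes> y) = zpow (\<not> u) \<otimes> y"
  by (simp_all add: zpow_def z_square flip: m_assoc)

lemma zpow_eq_one_iff [simp]: "zpow u = \<one> \<longleftrightarrow> \<not> u"
  using z_neq_one by (simp add: zpow_def)

lemma zpow_inject [simp]: "zpow u = zpow v \<longleftrightarrow> u = v"
  using z_neq_one by (simp add: zpow_def)

lemma zpow_central: "a \<in> carrier G \<Longrightarrow> zpow u \<otimes> a = a \<otimes> zpow u"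
  using z_central by (simp add: zpow_def)

lemma zpow_commute_assoc:
  "a \<in> carrier G \<Longrightarrow> y \<in> carrier G \<Longrightarrow> zpow u \<otimes> (a \<otimes> y) = a \<otimes> (zpow u \<otimes> y)"
  by (simp add: zpow_central[of a] flip: m_assoc)

lemma mult_zpow_eq_iff_eq_mult_zpow:
  "a \<in> carrier G \<Longrightarrow> b \<in> carrier G \<Longrightarrow> a \<otimes> zpow u = b \<longleftrightarrow> a = b \<otimes> zpow u"
  by (auto simp: m_assoc)

lemma mult_zpow_eq_mult_zpow_iff:
  "a \<in> carrier G \<Longrightarrow> b \<in> carrier G \<Longrightarrow> a \<otimes> zpow u = b \<otimes> zpow v \<longleftrightarrow> b = a \<otimes> zpow (u \<noteq> v)"
  by (auto simp: mult_zpow_eq_iff_eq_mult_zpow m_assoc)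

lemma mult_zpow_eq_iff [simp]:
  "a \<in> carrier G \<Longrightarrow> a \<otimes> zpow u = a \<otimes> zpow v \<longleftrightarrow> u = v"
  by (cases u; cases v) (simp_all add: zpow_def z_neq_one)

definition invariant_transversal :: "('a \<Rightarrow> 'a) \<Rightarrow> 'a set \<Rightarrow> bool" where
  "invariant_transversal \<rho> D \<longleftrightarrow>
     (\<forall>g\<in>carrier G. g \<otimes> z \<in> D \<longleftrightarrow> g \<notin> D) \<and> (\<forall>g\<in>carrier G. g \<in> D \<longrightarrow> \<rho> g \<in> D)"

lemma invariant_transversal_exists:
  assumes "finite (carrier G)"
    and "\<And>g. g \<in> carrier G \<Longrightarrow> \<rho> g \<in> carrier G" and "\<And>g. g \<in> carrier G \<Longrightarrow> \<rho> (\<rho> g) = g"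
    and "\<And>g. g \<in> carrier G \<Longrightarrow> \<rho> (g \<otimes> z) = \<rho> g \<otimes> z"
    and "\<And>g. g \<in> carrier G \<Longrightarrow> \<rho> g \<noteq> g \<otimes> z"
  shows "\<exists>D. invariant_transversal \<rho> D"
proof -
  have zz: "g \<otimes> z \<otimes> z = g" if "g \<in> carrier G" for g
    using that by (simp add: m_assoc z_square)
  have "free_involution_on (carrier G) (\<lambda>g. g \<otimes> z)"
    unfolding free_involution_on_def using zz z_neq_one by simp
  moreover have "free_involution_on (carrier G) (\<lambda>g. \<rho> g \<otimes> z)"
    unfolding free_involution_on_def
  proof (intro ballI conjI)
    fix g assume g: "g \<in> carrier G"
    show "\<rho> g \<otimes> z \<in> carrier G" using assms(2)[OF g] by simp
    show "\<rho> g \<otimes> z \<noteq> g" using assms(5)[OF g] zz[OF assms(2)[OF g]] by auto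
    show "\<rho> (\<rho> g \<otimes> z) \<otimes> z = g" using assms(3,4) zz[OF g] assms(2)[OF g] g by simp
  qed
  ultimately have "\<exists>\<sigma> :: 'a \<Rightarrow> bool. \<forall>g\<in>carrier G. \<sigma> (g \<otimes> z) \<noteq> \<sigma> g \<and> \<sigma> (\<rho> g \<otimes> z) \<noteq> \<sigma> g"
    by (rule two_free_involutions_coloring[OF assms(1)])
  then obtain \<sigma> :: "'a \<Rightarrow> bool"
    where \<sigma>: "\<And>g. g \<in> carrier G \<Longrightarrow> \<sigma> (g \<otimes> z) \<noteq> \<sigma> g \<and> \<sigma> (\<rho> g \<otimes> z) \<noteq> \<sigma> g"
    by blast
  have "invariant_transversal \<rho> {g. \<sigma> g}"
    unfolding invariant_transversal_def
  proof (intro conjI ballI impI)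
    show "g \<otimes> z \<in> {g. \<sigma> g} \<longleftrightarrow> g \<notin> {g. \<sigma> g}" if "g \<in> carrier G" for g
      using \<sigma>[OF that] by auto
    show "\<rho> g \<in> {g. \<sigma> g}" if "g \<in> carrier G" "g \<in> {g. \<sigma> g}" for g
      using \<sigma>[OF that(1)] \<sigma>[OF assms(2)[OF that(1)]] that(2) by auto
  qed
  then show ?thesis ..
qed

lemma invariant_transversal_image:
  "invariant_transversal \<rho> D \<Longrightarrow> g \<in> carrier G \<Longrightarrow> g \<in> D \<Longrightarrow> \<rho> g \<in> D"
  unfolding invariant_transversal_def by blast

lemma invariant_transversal_member:
  "invariant_transversal \<rho> D \<Longrightarrow> g \<in> carrier G \<Longrightarrow> g \<otimes> zpow (g \<notin> D) \<in> D"
  unfolding invariant_transversal_def by (cases "g \<in> D") (simp_all add: zpow_True)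

lemma invariant_transversal_unique:
  assumes "invariant_transversal \<rho> D" and "g \<in> carrier G" and "g \<in> D" and "g \<otimes> zpow u \<in> D"
  shows "\<not> u"
  using assms unfolding invariant_transversal_def by (cases u) (simp_all add: zpow_True)

lemma rcos_eq_iff_zpow:
  assumes "a \<in> carrier G" and "b \<in> carrier G"
  shows "{\<one>, z} #> a = {\<one>, z} #> b \<longleftrightarrow> (\<exists>u. b = a \<otimes> zpow u)"
proof -
  have rcos: "{\<one>, z} #> c = {c, c \<otimes> z}" if "c \<in> carrier G" for c
    using that by (auto simp: r_coset_def z_central)
  have "{a, a \<otimes> z} = {b, b \<otimes> z} \<longleftrightarrow> b = a \<or> b = a \<otimes> z"
  proof
    assume "{a, a \<otimes> z} = {b, b \<otimes> z}"
    then show "b = a \<or> b = a \<otimes> z" by (metis insertI1 insertE singletonD)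
  next
    assume "b = a \<or> b = a \<otimes> z"
    then show "{a, a \<otimes> z} = {b, b \<otimes> z}"
      using assms(1) by (auto simp: m_assoc z_square)
  qed
  also have "\<dots> \<longleftrightarrow> (\<exists>u. b = a \<otimes> zpow u)"
    using assms(1) by (simp add: ex_bool_eq zpow_True disj_commute)
  finally show ?thesis using rcos assms by simp
qed

lemma lift_complete_mapping:
  assumes "complete_mapping (G Mod {\<one>, z}) \<theta>"
  obtains th where "\<And>a. a \<in> carrier G \<Longrightarrow> th a \<in> carrier G"
    and "\<And>a. a \<in> carrier G \<Longrightarrow> th (a \<otimes> z) = th a"
    and "\<And>a. a \<in> carrier G \<Longrightarrow> \<theta> ({\<one>, z} #> a) = {\<one>, z} #> th a"
proof
  define th where "th a = (SOME b. b \<in> carrier G \<and> \<theta> ({\<one>, z} #> a) = {\<one>, z} #> b)" for a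
  have \<theta>: "bij_betw \<theta> (carrier (G Mod {\<one>, z})) (carrier (G Mod {\<one>, z}))"
    using assms unfolding complete_mapping_def by blast
  have ex: "\<exists>b. b \<in> carrier G \<and> \<theta> ({\<one>, z} #> a) = {\<one>, z} #> b" if a: "a \<in> carrier G" for a
  proof -
    have "{\<one>, z} #> a \<in> carrier (G Mod {\<one>, z})" using a by (simp add: carrier_FactGroup)
    then have "\<theta> ({\<one>, z} #> a) \<in> carrier (G Mod {\<one>, z})" using bij_betwE[OF \<theta>] by blast
    then show ?thesis by (auto simp: carrier_FactGroup)
  qed
  have th: "th a \<in> carrier G \<and> \<theta> ({\<one>, z} #> a) = {\<one>, z} #> th a" if "a \<in> carrier G" for a
    unfolding th_def using ex[OF that] by (rule someI_ex)
  then show "\<And>a. a \<in> carrier G \<Longrightarrow> th a \<in> carrier G"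
    and "\<And>a. a \<in> carrier G \<Longrightarrow> \<theta> ({\<one>, z} #> a) = {\<one>, z} #> th a"
    by blast+
  show "th (a \<otimes> z) = th a" if "a \<in> carrier G" for a
  proof -
    have "{\<one>, z} #> (a \<otimes> z) = {\<one>, z} #> a"
      using rcos_eq_iff_zpow[of a "a \<otimes> z"] that by (simp add: ex_bool_eq zpow_True)
    then show ?thesis unfolding th_def by simp
  qed
qed

lemma lift_inj_mod:
  assumes "complete_mapping (G Mod {\<one>, z}) \<theta>"
    and th: "\<And>a. a \<in> carrier G \<Longrightarrow> th a \<in> carrier G \<and> \<theta> ({\<one>, z} #> a) = {\<one>, z} #> th a"
    and a: "a \<in> carrier G" and b: "b \<in> carrier G" and ab: "th b = th a \<otimes> zpow u"
  shows "\<exists>w. b = a \<otimes> zpow w"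
proof -
  have inj: "inj_on \<theta> (carrier (G Mod {\<one>, z}))"
    using assms(1) unfolding complete_mapping_def bij_betw_def by blast
  have "{\<one>, z} #> th a = {\<one>, z} #> th b"
    using rcos_eq_iff_zpow[of "th a" "th b"] ab th[OF a] th[OF b] by blast
  then have "\<theta> ({\<one>, z} #> a) = \<theta> ({\<one>, z} #> b)" using th[OF a] th[OF b] by simp
  then have "{\<one>, z} #> a = {\<one>, z} #> b"
    by (rule inj_onD[OF inj]) (use a b in \<open>simp_all add: carrier_FactGroup\<close>)
  then show ?thesis using rcos_eq_iff_zpow[OF a b] by blast
qed

lemma mult_lift_inj_mod:
  assumes N: "{\<one>, z} \<lhd> G" and "complete_mapping (G Mod {\<one>, z}) \<theta>"
    and th: "\<And>a. a \<in> carrier G \<Longrightarrow> th a \<in> carrier G \<and> \<theta> ({\<one>, z} #> a) = {\<one>, z} #> th a"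
    and a: "a \<in> carrier G" and b: "b \<in> carrier G" and ab: "b \<otimes> th b = a \<otimes> th a \<otimes> zpow u"
  shows "\<exists>w. b = a \<otimes> zpow w"
proof -
  have inj: "inj_on (\<lambda>q. q \<otimes>\<^bsub>G Mod {\<one>, z}\<^esub> \<theta> q) (carrier (G Mod {\<one>, z}))"
    using assms(2) unfolding complete_mapping_def bij_betw_def by blast
  have sum: "({\<one>, z} #> c) \<otimes>\<^bsub>G Mod {\<one>, z}\<^esub> \<theta> ({\<one>, z} #> c) = {\<one>, z} #> (c \<otimes> th c)"
    if "c \<in> carrier G" for c
    using that th[OF that] normal.rcos_sum[OF N] by simp
  have "a \<otimes> th a \<in> carrier G" "b \<otimes> th b \<in> carrier G" using a b th by simp_all
  then have "{\<one>, z} #> (a \<otimes> th a) = {\<one>, z} #> (b \<otimes> th b)"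
    using rcos_eq_iff_zpow ab by blast
  then have "({\<one>, z} #> a) \<otimes>\<^bsub>G Mod {\<one>, z}\<^esub> \<theta> ({\<one>, z} #> a)
           = ({\<one>, z} #> b) \<otimes>\<^bsub>G Mod {\<one>, z}\<^esub> \<theta> ({\<one>, z} #> b)"
    by (simp only: sum[OF a] sum[OF b])
  then have "{\<one>, z} #> a = {\<one>, z} #> b"
    by (rule inj_onD[OF inj]) (use a b in \<open>simp_all add: carrier_FactGroup\<close>)
  then show ?thesis using rcos_eq_iff_zpow[OF a b] by blast
qed

lemma lift_quotient_involution:
  assumes N: "{\<one>, z} \<lhd> G" and h: "h \<in> carrier (G Mod {\<one>, z})"
    and "h \<noteq> \<one>\<^bsub>G Mod {\<one>, z}\<^esub>" and "h \<otimes>\<^bsub>G Mod {\<one>, z}\<^esub> h = \<one>\<^bsub>G Mod {\<one>, z}\<^esub>"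
  obtains x \<epsilon> where "x \<in> carrier G" and "h = {\<one>, z} #> x" and "\<And>u. x \<noteq> zpow u"
    and "x \<otimes> x = zpow \<epsilon>"
proof -
  obtain x where x: "x \<in> carrier G" and hx: "h = {\<one>, z} #> x"
    using h by (auto simp: carrier_FactGroup)
  have one: "{\<one>, z} #> \<one> = {\<one>, z}" by (simp add: coset_mult_one)
  have "x \<noteq> zpow u" for u
  proof
    assume "x = zpow u"
    then have "{\<one>, z} #> \<one> = {\<one>, z} #> x" using rcos_eq_iff_zpow[of \<one> x] x by auto
    then show False using assms(3) hx one by simp
  qed
  moreover obtain \<epsilon> where "x \<otimes> x = zpow \<epsilon>"
  proof -
    have "{\<one>, z} #> \<one> = {\<one>, z} #> (x \<otimes> x)"
      using assms(4) hx one normal.rcos_sum[OF N x x] by simp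
    then show thesis using that rcos_eq_iff_zpow[of \<one> "x \<otimes> x"] x by auto
  qed
  ultimately show thesis using that x hx by blast
qed

end

text \<open>\<open>th\<close> lifts a complete mapping \<open>\<theta>\<close> of \<open>G Mod {\<one>, z}\<close>, in the sense
  \<open>th a \<in> \<theta> ({\<one>, z} #> a)\<close>; \<open>x\<close> lifts an involution of the quotient; \<open>chi\<close> is a colouring of
  the quotient, read on representatives.\<close>

locale lifted_complete_mapping = central_involution +
  fixes x :: 'a and \<epsilon> :: bool and th :: "'a \<Rightarrow> 'a" and chi :: "'a \<Rightarrow> bool"
  assumes finite_carrier: "finite (carrier G)"
    and x_closed [simp]: "x \<in> carrier G" and x_notin: "x \<noteq> zpow u" and x_square: "x \<otimes> x = zpow \<epsilon>"
    and th_closed [simp]: "a \<in> carrier G \<Longrightarrow> th a \<in> carrier G"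
    and th_z: "a \<in> carrier G \<Longrightarrow> th (a \<otimes> z) = th a"
    and th_inj_mod: "\<lbrakk>a \<in> carrier G; b \<in> carrier G; th b = th a \<otimes> zpow u\<rbrakk> \<Longrightarrow> \<exists>w. b = a \<otimes> zpow w"
    and mult_th_inj_mod:
      "\<lbrakk>a \<in> carrier G; b \<in> carrier G; b \<otimes> th b = a \<otimes> th a \<otimes> zpow u\<rbrakk> \<Longrightarrow> \<exists>w. b = a \<otimes> zpow w"
    and chi_z: "g \<in> carrier G \<Longrightarrow> chi (g \<otimes> z) = chi g"
    and chi_x: "g \<in> carrier G \<Longrightarrow> chi (x \<otimes> g) = (chi g \<noteq> \<epsilon>)"
    and chi_th_x: "a \<in> carrier G \<Longrightarrow> chi (th (a \<otimes> x)) = (chi (th a) \<noteq> \<epsilon>)"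
begin

lemma th_zpow [simp]: "a \<in> carrier G \<Longrightarrow> th (a \<otimes> zpow u) = th a"
  by (cases u) (simp_all add: zpow_def th_z)

lemma chi_zpow [simp]: "g \<in> carrier G \<Longrightarrow> chi (g \<otimes> zpow u) = chi g"
  by (cases u) (simp_all add: zpow_def chi_z)

lemma zpow_x: "zpow u \<otimes> x = x \<otimes> zpow u"
  by (rule zpow_central) simp

lemma zpow_x_assoc [simp]: "y \<in> carrier G \<Longrightarrow> zpow u \<otimes> (x \<otimes> y) = x \<otimes> (zpow u \<otimes> y)"
  by (simp add: zpow_x flip: m_assoc)

lemma x_mult_zpow_neq [simp]: "x \<otimes> zpow u \<noteq> zpow v"
proof
  assume xu: "x \<otimes> zpow u = zpow v"
  have "x = x \<otimes> zpow u \<otimes> zpow u" by (simp add: m_assoc)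
  also have "\<dots> = zpow (v \<noteq> u)" by (simp add: xu)
  finally show False using x_notin by blast
qed

lemma x_square_assoc [simp]: "y \<in> carrier G \<Longrightarrow> x \<otimes> (x \<otimes> y) = zpow \<epsilon> \<otimes> y"
  by (simp add: x_square flip: m_assoc)

text \<open>The colouring \<open>chi\<close> is what makes \<open>tau\<close> and \<open>rho\<close> involutions when \<open>x \<otimes> x = z\<close>.\<close>

definition tau :: "'a \<Rightarrow> 'a" where
  "tau a = a \<otimes> x \<otimes> zpow (chi (th a))"

definition rho :: "'a \<Rightarrow> 'a" where
  "rho g = x \<otimes> g \<otimes> zpow (\<not> chi (x \<otimes> g))"

lemma tau_closed [simp]: "a \<in> carrier G \<Longrightarrow> tau a \<in> carrier G"
  by (simp add: tau_def)

lemma chi_th_tau: "a \<in> carrier G \<Longrightarrow> chi (th (tau a)) = (chi (th a) \<noteq> \<epsilon>)"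
  by (simp add: tau_def chi_th_x)

lemma tau_tau: "a \<in> carrier G \<Longrightarrow> tau (tau a) = a"
proof -
  assume a: "a \<in> carrier G"
  have "tau (tau a) = tau a \<otimes> x \<otimes> zpow (chi (th a) \<noteq> \<epsilon>)"
    using a by (simp add: tau_def[of "tau a"] chi_th_tau)
  also have "\<dots> = a"
    using a by (cases \<epsilon>) (simp_all add: tau_def m_assoc x_square)
  finally show ?thesis .
qed

lemma tau_zpow: "a \<in> carrier G \<Longrightarrow> tau (a \<otimes> zpow u) = tau a \<otimes> zpow u"
  by (cases u) (simp_all add: tau_def m_assoc)

lemma tau_neq: "a \<in> carrier G \<Longrightarrow> tau a \<noteq> a \<otimes> zpow u"
  by (simp add: tau_def m_assoc)

lemma rho_closed [simp]: "g \<in> carrier G \<Longrightarrow> rho g \<in> carrier G"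
  by (simp add: rho_def)

lemma rho_rho: "g \<in> carrier G \<Longrightarrow> rho (rho g) = g"
proof -
  assume g: "g \<in> carrier G"
  define c where "c = (\<not> (chi g \<noteq> \<epsilon>))"
  have r: "rho g = x \<otimes> (g \<otimes> zpow c)" using g by (simp add: rho_def chi_x c_def m_assoc)
  have "x \<otimes> rho g = g \<otimes> zpow (\<epsilon> \<noteq> c)"
    using g by (simp add: r zpow_commute_assoc[of g])
  then have "rho (rho g) = g \<otimes> zpow (\<epsilon> \<noteq> c) \<otimes> zpow (\<not> chi g)"
    using g by (simp add: rho_def[of "rho g"])
  also have "\<dots> = g" using g by (cases \<epsilon>) (simp_all add: m_assoc c_def)
  finally show ?thesis .
qed

lemma rho_zpow: "g \<in> carrier G \<Longrightarrow> rho (g \<otimes> zpow u) = rho g \<otimes> zpow u"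
  by (cases u) (simp_all add: rho_def m_assoc chi_x)

lemma rho_neq: "g \<in> carrier G \<Longrightarrow> rho g \<noteq> g \<otimes> zpow u"
proof
  assume g: "g \<in> carrier G" and "rho g = g \<otimes> zpow u"
  then have "x \<otimes> g \<otimes> zpow (\<not> chi (x \<otimes> g)) = zpow u \<otimes> g" by (simp add: rho_def zpow_central)
  then have "x \<otimes> zpow (\<not> chi (x \<otimes> g)) \<otimes> g = zpow u \<otimes> g"
    using g by (simp add: m_assoc zpow_central[of g])
  then have "x \<otimes> zpow (\<not> chi (x \<otimes> g)) = zpow u" using g by simp
  then show False by simp
qed

definition D :: "'a set" where
  "D = (SOME D. invariant_transversal tau D)"

definition E :: "'a set" where
  "E = (SOME E. invariant_transversal rho E)"

lemma invariant_transversal_D: "invariant_transversal tau D"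
  unfolding D_def
proof (rule someI_ex, rule invariant_transversal_exists[OF finite_carrier])
  show "\<And>g. g \<in> carrier G \<Longrightarrow> tau (g \<otimes> z) = tau g \<otimes> z"
    using tau_zpow[of _ True] by (simp add: zpow_True)
  show "\<And>g. g \<in> carrier G \<Longrightarrow> tau g \<noteq> g \<otimes> z"
    using tau_neq[of _ True] by (simp add: zpow_True)
qed (simp_all add: tau_tau)

lemma invariant_transversal_E: "invariant_transversal rho E"
  unfolding E_def
proof (rule someI_ex, rule invariant_transversal_exists[OF finite_carrier])
  show "\<And>g. g \<in> carrier G \<Longrightarrow> rho (g \<otimes> z) = rho g \<otimes> z"
    using rho_zpow[of _ True] by (simp add: zpow_True)
  show "\<And>g. g \<in> carrier G \<Longrightarrow> rho g \<noteq> g \<otimes> z"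
    using rho_neq[of _ True] by (simp add: zpow_True)
qed (simp_all add: rho_rho)

text \<open>\<open>Phi a\<close> is the lift of \<open>th a\<close> lying in \<open>E\<close>; invariance of \<open>E\<close> under \<open>rho\<close> makes
  these lifts coherent along \<open>x\<close> (\<open>Phi_pair\<close>).\<close>

definition Phi :: "'a \<Rightarrow> 'a" where
  "Phi a = th a \<otimes> zpow (th a \<notin> E)"

lemma Phi_closed [simp]: "a \<in> carrier G \<Longrightarrow> Phi a \<in> carrier G"
  by (simp add: Phi_def)

lemma Phi_in_E: "a \<in> carrier G \<Longrightarrow> Phi a \<in> E"
  unfolding Phi_def by (simp add: invariant_transversal_member[OF invariant_transversal_E])

lemma Phi_unique:
  assumes a: "a \<in> carrier G" and "th a \<otimes> zpow u \<in> E"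
  shows "th a \<otimes> zpow u = Phi a"
proof -
  have "Phi a \<otimes> zpow (u \<noteq> (th a \<notin> E)) = th a \<otimes> zpow u"
    using a by (simp add: Phi_def m_assoc; blast)
  then have "Phi a \<otimes> zpow (u \<noteq> (th a \<notin> E)) \<in> E" using assms(2) by simp
  then have "u = (th a \<notin> E)"
    using invariant_transversal_unique[OF invariant_transversal_E Phi_closed[OF a] Phi_in_E[OF a]]
    by blast
  then show ?thesis by (simp add: Phi_def)
qed

lemma Phi_pair:
  assumes a: "a \<in> carrier G" and b: "b \<in> carrier G" and ab: "th b = x \<otimes> th a \<otimes> zpow w"
  shows "Phi b = x \<otimes> Phi a \<otimes> zpow (\<not> chi (th b))"
proof -
  have "x \<otimes> Phi a = th b \<otimes> zpow (w \<noteq> (th a \<notin> E))"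
    using a by (simp add: ab Phi_def m_assoc; blast)
  then have "rho (Phi a) = th b \<otimes> zpow ((w \<noteq> (th a \<notin> E)) \<noteq> (\<not> chi (th b)))"
    using a b by (simp add: rho_def m_assoc)
  moreover have "rho (Phi a) \<in> E"
    using invariant_transversal_image[OF invariant_transversal_E _ Phi_in_E] a by simp
  ultimately have "rho (Phi a) = Phi b" using Phi_unique[OF b] by simp
  then show ?thesis by (simp add: rho_def \<open>x \<otimes> Phi a = _\<close> a b)
qed

lemma D_eq_if_th_eq:
  assumes "a \<in> carrier G" "b \<in> carrier G" "a \<in> D" "b \<in> D" and "th b = th a \<otimes> zpow u"
  shows "b = a"
proof -
  obtain w where w: "b = a \<otimes> zpow w" using th_inj_mod assms(1,2,5) by blast
  then have "\<not> w"
    using invariant_transversal_unique[OF invariant_transversal_D] assms(1,3,4) by blast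
  then show ?thesis using w assms(1) by simp
qed

lemma D_eq_if_Phi_eq:
  assumes "a \<in> carrier G" "b \<in> carrier G" "a \<in> D" "b \<in> D" and "Phi b = Phi a \<otimes> zpow u"
  shows "b = a"
proof (rule D_eq_if_th_eq[OF assms(1-4)])
  have "th b \<otimes> zpow (th b \<notin> E) = th a \<otimes> zpow (u \<noteq> (th a \<notin> E))"
    using assms(1,2,5) by (simp add: Phi_def m_assoc; blast)
  then show "th b = th a \<otimes> zpow ((u \<noteq> (th a \<notin> E)) \<noteq> (th b \<notin> E))"
    using assms(1,2) by (simp add: mult_zpow_eq_iff_eq_mult_zpow m_assoc)
qed

lemma D_eq_if_mult_Phi_eq:
  assumes "a \<in> carrier G" "b \<in> carrier G" "a \<in> D" "b \<in> D" and "b \<otimes> Phi b = a \<otimes> Phi a \<otimes> zpow u"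
  shows "b = a"
proof -
  have "b \<otimes> th b \<otimes> zpow (th b \<notin> E) = a \<otimes> th a \<otimes> zpow (u \<noteq> (th a \<notin> E))"
    using assms(1,2,5) by (simp add: Phi_def m_assoc; blast)
  then have "b \<otimes> th b = a \<otimes> th a \<otimes> zpow ((u \<noteq> (th a \<notin> E)) \<noteq> (th b \<notin> E))"
    using assms(1,2) by (subst (asm) mult_zpow_eq_iff_eq_mult_zpow) (simp_all add: m_assoc)
  then obtain w where w: "b = a \<otimes> zpow w" using mult_th_inj_mod assms(1,2) by blast
  then have "\<not> w"
    using invariant_transversal_unique[OF invariant_transversal_D] assms(1,3,4) by blast
  then show ?thesis using w assms(1) by simp
qed

text \<open>Outside \<open>D\<close> every element is \<open>tau d \<otimes> z\<close> with \<open>d \<in> D\<close>, and there \<open>phi\<close> is chosen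
  so that the product becomes \<open>d \<otimes> Phi d \<otimes> z\<close> (\<open>mult_phi_tau_z\<close>).\<close>

definition phi :: "'a \<Rightarrow> 'a" where
  "phi a = (if a \<in> D then Phi a else x \<otimes> Phi (tau (a \<otimes> z)) \<otimes> zpow (chi (th a)))"

lemma phi_closed [simp]: "a \<in> carrier G \<Longrightarrow> phi a \<in> carrier G"
  by (simp add: phi_def)

lemma notin_D_eq_tau_z:
  assumes "a \<in> carrier G" and "a \<notin> D"
  obtains d where "d \<in> carrier G" and "d \<in> D" and "a = tau d \<otimes> z"
proof
  show "tau (a \<otimes> z) \<in> carrier G" using assms(1) by simp
  show "tau (a \<otimes> z) \<in> D"
    using invariant_transversal_D assms unfolding invariant_transversal_def by simp
  show "a = tau (tau (a \<otimes> z)) \<otimes> z" using assms(1) by (simp add: tau_tau m_assoc z_square)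
qed

lemma phi_tau_z:
  assumes "d \<in> carrier G" and "d \<in> D"
  shows "phi (tau d \<otimes> z) = x \<otimes> Phi d \<otimes> zpow (chi (th d) \<noteq> \<epsilon>)"
proof -
  have "tau d \<in> D"
    using invariant_transversal_image[OF invariant_transversal_D] assms by blast
  then have "tau d \<otimes> z \<notin> D"
    using invariant_transversal_D assms(1) unfolding invariant_transversal_def by simp
  moreover have "tau (tau d \<otimes> z \<otimes> z) = d" using assms(1) by (simp add: tau_tau m_assoc z_square)
  moreover have "chi (th (tau d \<otimes> z)) = (chi (th d) \<noteq> \<epsilon>)"
    using assms(1) th_z chi_th_tau by simp
  ultimately show ?thesis by (simp add: phi_def)
qed

lemma mult_phi_tau_z:
  assumes "d \<in> carrier G" and "d \<in> D"
  shows "tau d \<otimes> z \<otimes> phi (tau d \<otimes> z) = d \<otimes> Phi d \<otimes> z"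
proof -
  have "tau d \<otimes> z \<otimes> phi (tau d \<otimes> z)
      = d \<otimes> (x \<otimes> (zpow (chi (th d)) \<otimes> (z \<otimes> (x \<otimes> (Phi d \<otimes> zpow (chi (th d) \<noteq> \<epsilon>))))))"
    unfolding phi_tau_z[OF assms] using assms by (simp add: tau_def m_assoc)
  also have "\<dots> = d \<otimes> Phi d \<otimes> z"
    using assms(1)
    by (cases \<epsilon>) (simp_all add: zpow_commute_assoc[of "Phi d"] zpow_True z_central m_assoc)
  finally show ?thesis .
qed

lemma th_pair_if_Phi_pair:
  assumes "a \<in> carrier G" "b \<in> carrier G" and "Phi b = x \<otimes> Phi a \<otimes> zpow u"
  shows "th b = x \<otimes> th a \<otimes> zpow ((u \<noteq> (th a \<notin> E)) \<noteq> (th b \<notin> E))"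
proof -
  have "th b \<otimes> zpow (th b \<notin> E) = x \<otimes> th a \<otimes> zpow (u \<noteq> (th a \<notin> E))"
    using assms by (simp add: Phi_def m_assoc; blast)
  then show ?thesis
    using assms(1,2) by (subst (asm) mult_zpow_eq_iff_eq_mult_zpow) (simp_all add: m_assoc)
qed

lemma phi_neq_if_D_notin_D:
  assumes a: "a \<in> carrier G" "a \<in> D" and b: "b \<in> carrier G" "b \<notin> D"
  shows "phi a \<noteq> phi b"
proof
  obtain e where e: "e \<in> carrier G" "e \<in> D" and be: "b = tau e \<otimes> z"
    using notin_D_eq_tau_z[OF b] by blast
  assume "phi a = phi b"
  then have Phi_a: "Phi a = x \<otimes> Phi e \<otimes> zpow (chi (th e) \<noteq> \<epsilon>)"
    using a e by (simp add: be phi_tau_z) (simp add: phi_def)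
  then obtain w where "th a = x \<otimes> th e \<otimes> zpow w"
    using th_pair_if_Phi_pair[OF e(1) a(1)] by blast
  then have "chi (th a) = (chi (th e) \<noteq> \<epsilon>)" using e(1) by (simp add: chi_x)
  then have "Phi a = x \<otimes> Phi e \<otimes> zpow (\<not> (chi (th e) \<noteq> \<epsilon>))"
    using Phi_pair[OF e(1) a(1) \<open>th a = _\<close>] by simp
  with Phi_a show False using e(1) by (cases \<epsilon>) simp_all
qed

lemma phi_inj: "inj_on phi (carrier G)"
proof (rule inj_onI)
  fix a b assume a: "a \<in> carrier G" and b: "b \<in> carrier G" and eq: "phi a = phi b"
  consider "a \<in> D" "b \<in> D" | "a \<in> D" "b \<notin> D" | "a \<notin> D" "b \<in> D" | "a \<notin> D" "b \<notin> D"
    by blast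
  then show "a = b"
  proof cases
    case 1
    then have "Phi b = Phi a \<otimes> zpow False" using eq a b by (simp add: phi_def)
    from D_eq_if_Phi_eq[OF a b 1 this] show ?thesis by simp
  next
    case 2
    then show ?thesis using phi_neq_if_D_notin_D[OF a 2(1) b 2(2)] eq by simp
  next
    case 3
    then show ?thesis using phi_neq_if_D_notin_D[OF b 3(2) a 3(1)] eq by simp
  next
    case 4
    obtain d where d: "d \<in> carrier G" "d \<in> D" and ad: "a = tau d \<otimes> z"
      using notin_D_eq_tau_z[OF a 4(1)] by blast
    obtain e where e: "e \<in> carrier G" "e \<in> D" and be: "b = tau e \<otimes> z"
      using notin_D_eq_tau_z[OF b 4(2)] by blast
    have "Phi d \<otimes> zpow (chi (th d) \<noteq> \<epsilon>) = Phi e \<otimes> zpow (chi (th e) \<noteq> \<epsilon>)"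
      using eq d e by (simp add: ad be phi_tau_z m_assoc)
    then have "Phi e = Phi d \<otimes> zpow ((chi (th d) \<noteq> \<epsilon>) \<noteq> (chi (th e) \<noteq> \<epsilon>))"
      by (rule mult_zpow_eq_mult_zpow_iff[THEN iffD1, OF Phi_closed[OF d(1)] Phi_closed[OF e(1)]])
    then have "e = d" by (rule D_eq_if_Phi_eq[OF d(1) e(1) d(2) e(2)])
    then show ?thesis using ad be by simp
  qed
qed

lemma mult_phi_cases:
  assumes "a \<in> carrier G"
  obtains d where "d \<in> carrier G" and "d \<in> D" and "a \<otimes> phi a = d \<otimes> Phi d \<otimes> zpow (a \<notin> D)"
    and "a \<in> D \<Longrightarrow> a = d" and "a \<notin> D \<Longrightarrow> a = tau d \<otimes> z"
proof (cases "a \<in> D")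
  case True
  show thesis by (rule that[of a]) (use True assms in \<open>simp_all add: phi_def\<close>)
next
  case False
  obtain d where d: "d \<in> carrier G" "d \<in> D" and ad: "a = tau d \<otimes> z"
    using notin_D_eq_tau_z[OF assms False] by blast
  have "a \<otimes> phi a = d \<otimes> Phi d \<otimes> zpow (a \<notin> D)"
    using False mult_phi_tau_z[OF d] by (simp add: ad zpow_True)
  then show thesis by (rule that[OF d]) (use False ad in simp_all)
qed

lemma mult_phi_inj: "inj_on (\<lambda>a. a \<otimes> phi a) (carrier G)"
proof (rule inj_onI)
  fix a b assume a: "a \<in> carrier G" and b: "b \<in> carrier G" and eq: "a \<otimes> phi a = b \<otimes> phi b"
  obtain d where d: "d \<in> carrier G" "d \<in> D" and ad: "a \<otimes> phi a = d \<otimes> Phi d \<otimes> zpow (a \<notin> D)"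
    and da: "a \<in> D \<Longrightarrow> a = d" "a \<notin> D \<Longrightarrow> a = tau d \<otimes> z"
    using mult_phi_cases[OF a] by blast
  obtain e where e: "e \<in> carrier G" "e \<in> D" and be: "b \<otimes> phi b = e \<otimes> Phi e \<otimes> zpow (b \<notin> D)"
    and eb: "b \<in> D \<Longrightarrow> b = e" "b \<notin> D \<Longrightarrow> b = tau e \<otimes> z"
    using mult_phi_cases[OF b] by blast
  have de: "e \<otimes> Phi e = d \<otimes> Phi d \<otimes> zpow ((a \<notin> D) \<noteq> (b \<notin> D))"
    using eq ad be d e by (simp add: mult_zpow_eq_mult_zpow_iff)
  then have "e = d" by (rule D_eq_if_mult_Phi_eq[OF d(1) e(1) d(2) e(2)])
  then have "(a \<in> D) = (b \<in> D)" using de d by simp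
  then show "a = b" using \<open>e = d\<close> da eb by (cases "a \<in> D") simp_all
qed

lemma complete_mapping_phi: "complete_mapping G phi"
proof -
  have "phi ` carrier G \<subseteq> carrier G" and "(\<lambda>a. a \<otimes> phi a) ` carrier G \<subseteq> carrier G"
    by auto
  then show ?thesis
    unfolding complete_mapping_def bij_betw_def
    using endo_inj_surj[OF finite_carrier] phi_inj mult_phi_inj by blast
qed

end

lemma (in central_involution) has_complete_mapping_if_quotient:
  assumes fin: "finite (carrier G)" and N: "{\<one>, z} \<lhd> G"
    and cm: "has_complete_mapping (G Mod {\<one>, z})" and even: "even (order (G Mod {\<one>, z}))"
  shows "has_complete_mapping G"
proof -
  let ?N = "{\<one>, z}"
  interpret Q: group "G Mod ?N" using N by (rule normal.factorgroup_is_group)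
  have finQ: "finite (carrier (G Mod ?N))" using fin by (simp add: carrier_FactGroup)
  obtain \<theta> where \<theta>: "complete_mapping (G Mod ?N) \<theta>"
    using cm unfolding has_complete_mapping_def by blast
  obtain h where h: "h \<in> carrier (G Mod ?N)" "h \<noteq> \<one>\<^bsub>G Mod ?N\<^esub>" "h \<otimes>\<^bsub>G Mod ?N\<^esub> h = \<one>\<^bsub>G Mod ?N\<^esub>"
    using Q.involution_if_even_order[OF finQ even] by blast
  obtain \<kappa> :: "'a set \<Rightarrow> bool" where \<kappa>_h: "\<And>q. q \<in> carrier (G Mod ?N) \<Longrightarrow> \<kappa> (h \<otimes>\<^bsub>G Mod ?N\<^esub> q) \<noteq> \<kappa> q"
    and \<kappa>_\<theta>: "\<And>q. q \<in> carrier (G Mod ?N) \<Longrightarrow> \<kappa> (\<theta> (q \<otimes>\<^bsub>G Mod ?N\<^esub> h)) \<noteq> \<kappa> (\<theta> q)"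
    using Q.complete_mapping_involution_coloring[OF finQ \<theta> h] by metis
  obtain x \<epsilon> where x: "x \<in> carrier G" "h = ?N #> x" "\<And>u. x \<noteq> zpow u" "x \<otimes> x = zpow \<epsilon>"
    using lift_quotient_involution[OF N h] by blast
  obtain th where th: "\<And>a. a \<in> carrier G \<Longrightarrow> th a \<in> carrier G"
    "\<And>a. a \<in> carrier G \<Longrightarrow> th (a \<otimes> z) = th a"
    "\<And>a. a \<in> carrier G \<Longrightarrow> \<theta> (?N #> a) = ?N #> th a"
    using lift_complete_mapping[OF \<theta>] by blast
  interpret lifted_complete_mapping G z x \<epsilon> th "\<lambda>g. \<epsilon> \<and> \<kappa> (?N #> g)"
  proof unfold_locales
    show "\<epsilon> \<and> \<kappa> (?N #> (g \<otimes> z)) \<longleftrightarrow> \<epsilon> \<and> \<kappa> (?N #> g)" if "g \<in> carrier G" for g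
      using rcos_eq_iff_zpow[of g "g \<otimes> z"] that by (simp add: ex_bool_eq zpow_True)
    show "\<epsilon> \<and> \<kappa> (?N #> (x \<otimes> g)) \<longleftrightarrow> (\<epsilon> \<and> \<kappa> (?N #> g)) \<noteq> \<epsilon>" if "g \<in> carrier G" for g
      using \<kappa>_h[of "?N #> g"] that x normal.rcos_sum[OF N x(1) that]
      by (auto simp: carrier_FactGroup)
    show "\<epsilon> \<and> \<kappa> (?N #> th (a \<otimes> x)) \<longleftrightarrow> (\<epsilon> \<and> \<kappa> (?N #> th a)) \<noteq> \<epsilon>" if "a \<in> carrier G" for a
      using \<kappa>_\<theta>[of "?N #> a"] that x th(1,3) normal.rcos_sum[OF N that x(1)]
      by (auto simp: carrier_FactGroup)
    show "\<exists>w. b = a \<otimes> zpow w"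
      if "a \<in> carrier G" "b \<in> carrier G" "th b = th a \<otimes> zpow u" for a b u
      using lift_inj_mod[OF \<theta> _ that] th by blast
    show "\<exists>w. b = a \<otimes> zpow w"
      if "a \<in> carrier G" "b \<in> carrier G" "b \<otimes> th b = a \<otimes> th a \<otimes> zpow u" for a b u
      using mult_lift_inj_mod[OF N \<theta> _ that] th by blast
  qed (use fin x th in simp_all)
  show ?thesis
    using complete_mapping_phi unfolding has_complete_mapping_def by blast
qed

theorem proposition2p4:
  fixes G :: "('a, 'b) monoid_scheme" and N :: "'a set"
  assumes "group G" and "finite (carrier G)" and "good_group G"
    and "N \<lhd> G" and "card N = 2"
    and "has_complete_mapping (G Mod N)"
  shows "has_complete_mapping G"
proof -
  interpret group G by fact
  obtain z where N: "N = {\<one>\<^bsub>G\<^esub>, z}" and z: "central_involution G z"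
    using normal_card_two_central[OF assms(4,5)] by blast
  have "even (order (G Mod N))"
    using quotient_even_order_if_good[OF assms(2-5)] .
  with assms(4,6) show ?thesis
    unfolding N by (rule central_involution.has_complete_mapping_if_quotient[OF z assms(2)])
qed

end
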